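(* Let $A$ be an $n\times n$ binary matrix with zero diagonal and $\widetilde A=A+I_n$. The facets-pairing structure $\mathcal{F}_A$ on $\mathcal{C}^n$ is strong if and only if for all $1\le j_1<\dots<j_s\le n$ one has $\mathrm{rank}_{\mathbb{Z}_2}\big(\widetilde A^{j_1\cdots j_s}_{j_1\cdots j_s}\big)=\mathrm{rank}_{\mathbb{Z}_2}\big(\widetilde A^{j_1\cdots j_s}\big)$.
   Context: $\mathcal{C}^n=\{x\in\mathbb{R}^n: -\tfrac14\le x_i\le\tfrac14\}$; $\mathbf{F}(i)$, $\mathbf{F}(-i)$ ($1\le i\le n$) are the facets in $\{x_i=\tfrac14\}$, $\{x_i=-\tfrac14\}$. Binary matrices have entries in $\mathbb{Z}_2$; $A^i_k$ denotes the $(i,k)$ entry viewed as $0$ or $1$. For $1\le j_1<\dots<j_s\le n$, $\widetilde A^{j_1\cdots j_s}$ is the $s\times n$ submatrix of $\widetilde A$ formed by rows $j_1,\dots,j_s$, and $\widetilde A^{j_1\cdots j_s}_{j_1\cdots j_s}$ is the $s\times s$ principal submatrix on rows and columns $j_1,\dots,j_s$. $\mathcal{F}_A$ pairs $\mathbf{F}(j)$ with $\mathbf{F}(-j)$ via $\tau^A_j:\mathbf{F}(j)\to\mathbf{F}(-j)$, $\tau^A_j(x)=y$ with $y_{|j|}=-x_{|j|}$ and $y_k=(-1)^{A^{|j|}_k}x_k$ for $k\ne|j|$. A composition $\tau^A_{k_m}\circ\dots\circ\tau^A_{k_1}$ applied to a proper face $f$ is valid if $f\subset\mathbf{F}(k_1)$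 and $\tau^A_{k_i}\circ\dots\circ\tau^A_{k_1}(f)\subset\mathbf{F}(k_{i+1})$ for $1\le i<m$ ($m=0$ allowed, giving the identity). For a proper face $f$ let $\Xi(f)$ be the set of facets containing $f$; if $f\subset\mathbf{F}(k)$ and $f'=\tau^A_k(f)$, define $\Psi^f_k:\Xi(f)\to\Xi(f')$ by $\Psi^f_k(\mathbf{F}(k))=\mathbf{F}(-k)$ and, for $F'\in\Xi(f)\setminus\{\mathbf{F}(k)\}$, $\Psi^f_k(F')$ is the facet $G$ with $G\cap\mathbf{F}(-k)=\tau^A_k(F'\cap\mathbf{F}(k))$. $\mathcal{F}_A$ is strong if for every proper face $f$ and any two valid compositions mapping $f$ onto the same face $\widetilde f$: (a) they agree at every point of $f$; and (b) the corresponding composites of the maps $\Psi$ along the two compositions coincide as maps $\Xi(f)\to\Xi(\widetilde f)$. *)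

theory Defs
  imports "HOL-Library.Z2" "Jordan_Normal_Form.DL_Rank" "Jordan_Normal_Form.DL_Submatrix"
begin

text \<open>Points of R^n are functions nat => real, with coordinates 1..n
  (all other coordinates are 0).\<close>

definition cube :: "nat \<Rightarrow> (nat \<Rightarrow> real) set" where
  "cube n = {x. (\<forall>i\<in>{1..n}. -1/4 \<le> x i \<and> x i \<le> 1/4) \<and> (\<forall>i. i \<notin> {1..n} \<longrightarrow> x i = 0)}"

definition facet_idx :: "nat \<Rightarrow> int \<Rightarrow> bool" where
  "facet_idx n j \<longleftrightarrow> j \<noteq> 0 \<and> nat \<bar>j\<bar> \<le> n"

definition facet :: "nat \<Rightarrow> int \<Rightarrow> (nat \<Rightarrow> real) set" where
  "facet n j = {x \<in> cube n. x (nat \<bar>j\<bar>) = of_int (sgn j) / 4}"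

definition facets :: "nat \<Rightarrow> (nat \<Rightarrow> real) set set" where
  "facets n = facet n ` {j. facet_idx n j}"

text \<open>Proper (nonempty, not the whole cube) faces of the cube: fix a nonempty set D of
  coordinates to values +-1/4.\<close>
definition proper_face :: "nat \<Rightarrow> (nat \<Rightarrow> real) set \<Rightarrow> bool" where
  "proper_face n f \<longleftrightarrow> (\<exists>D s. D \<subseteq> {1..n} \<and> D \<noteq> {} \<and> (\<forall>i\<in>D. s i = (1::real) \<or> s i = -1) \<and>
      f = {x \<in> cube n. \<forall>i\<in>D. x i = s i / 4})"

text \<open>Entry A^i_k (1-based) of a binary matrix (Jordan_Normal_Form matrices are 0-based).\<close>
definition ent :: "bit mat \<Rightarrow> nat \<Rightarrow> nat \<Rightarrow> bit" where
  "ent A i k = A $$ (i - 1, k - 1)"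

definition tau :: "nat \<Rightarrow> bit mat \<Rightarrow> int \<Rightarrow> (nat \<Rightarrow> real) \<Rightarrow> (nat \<Rightarrow> real)" where
  "tau n A j x = (\<lambda>k. if k = nat \<bar>j\<bar> then - x k
      else if k \<in> {1..n} \<and> ent A (nat \<bar>j\<bar>) k = 1 then - x k else x k)"

text \<open>A composition tau_{k_m} o ... o tau_{k_1} is given by the list [k_1, ..., k_m].\<close>
fun valid_comp :: "nat \<Rightarrow> bit mat \<Rightarrow> int list \<Rightarrow> (nat \<Rightarrow> real) set \<Rightarrow> bool" where
  "valid_comp n A [] f = True"
| "valid_comp n A (k # ks) f =
     (facet_idx n k \<and> f \<subseteq> facet n k \<and> valid_comp n A ks (tau n A k ` f))"

fun comp_tau :: "nat \<Rightarrow> bit mat \<Rightarrow> int list \<Rightarrow> (nat \<Rightarrow> real) \<Rightarrow> (nat \<Rightarrow> real)" where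
  "comp_tau n A [] = id"
| "comp_tau n A (k # ks) = comp_tau n A ks \<circ> tau n A k"

definition Xi :: "nat \<Rightarrow> (nat \<Rightarrow> real) set \<Rightarrow> (nat \<Rightarrow> real) set set" where
  "Xi n f = {F \<in> facets n. f \<subseteq> F}"

text \<open>Psi^f_k (its value does not depend on f, only its domain Xi f does).\<close>
definition Psi :: "nat \<Rightarrow> bit mat \<Rightarrow> int \<Rightarrow> (nat \<Rightarrow> real) set \<Rightarrow> (nat \<Rightarrow> real) set" where
  "Psi n A k F' = (if F' = facet n k then facet n (-k)
     else (THE G. G \<in> facets n \<and> G \<inter> facet n (-k) = tau n A k ` (F' \<inter> facet n k)))"

fun comp_Psi :: "nat \<Rightarrow> bit mat \<Rightarrow> int list \<Rightarrow> (nat \<Rightarrow> real) set \<Rightarrow> (nat \<Rightarrow> real) set" where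
  "comp_Psi n A [] F = F"
| "comp_Psi n A (k # ks) F = comp_Psi n A ks (Psi n A k F)"

definition strong :: "nat \<Rightarrow> bit mat \<Rightarrow> bool" where
  "strong n A \<longleftrightarrow> (\<forall>f ks ks'. proper_face n f \<and> valid_comp n A ks f \<and> valid_comp n A ks' f
      \<and> comp_tau n A ks ` f = comp_tau n A ks' ` f \<longrightarrow>
        (\<forall>x\<in>f. comp_tau n A ks x = comp_tau n A ks' x) \<and>
        (\<forall>F\<in>Xi n f. comp_Psi n A ks F = comp_Psi n A ks' F))"

end

theory Submission
  imports Defs
begin

text \<open>
  Every gluing map \<open>\<tau>\<^sub>j\<close> is the reflection of \<open>\<real>\<^sup>n\<close> reversing the coordinates
  in row \<open>|j|\<close> of \<open>\<tilde>A = A + I\<close>, so a composite of \<open>\<tau>\<close>'s is the reflection given by the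
  \<open>\<int>\<^sub>2\<close>-sum of the rows used; the maps \<open>\<Psi>\<close> act on facets by the same row sums.  A valid
  composition on the proper face fixing the coordinates \<open>D\<close> may use exactly the rows indexed
  by \<open>D\<close>, and two of them have the same image iff their row sums agree on \<open>D\<close>.  Hence
  \<open>F\<^sub>A\<close> is strong iff, for every nonempty \<open>D\<close>, a row sum over \<open>D\<close> vanishing on \<open>D\<close>
  vanishes everywhere (\<open>row_sums_faithful\<close>).  In matrix language this says that every linear
  relation among the rows \<open>J\<close> of \<open>\<tilde>A\<close> holding on the columns \<open>J\<close> holds on all columns,
  i.e. the left kernels of \<open>\<tilde>A\<^sup>J\<^sub>J\<close> and \<open>\<tilde>A\<^sup>J\<close> agree, which is equality of ranks.
\<close>

context vec_space
begin

lemma maximal_indpt_spans: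
  assumes S: "S \<subseteq> carrier_vec n" and U: "maximal U (\<lambda>T. T \<subseteq> S \<and> lin_indpt T)"
  shows "S \<subseteq> span U"
proof
  fix s assume s: "s \<in> S"
  have US: "U \<subseteq> S" and li: "lin_indpt U" using U unfolding maximal_def by auto
  show "s \<in> span U"
  proof (cases "s \<in> U")
    case True
    then show ?thesis using in_own_span[of U] US S by auto
  next
    case False
    have "lin_dep (insert s U)"
    proof (rule ccontr)
      assume "lin_indpt (insert s U)"
      then have "insert s U = U" using U s US unfolding maximal_def by blast
      then show False using False by auto
    qed
    then show ?thesis using lin_dep_iff_in_span[of U s] US S s li False by auto
  qed
qed

lemma indpt_extends_to_basis:
  assumes W: "W \<subseteq> carrier_vec n" "finite W" "lin_indpt W"
  shows "\<exists>B. finite B \<and> W \<subseteq> B \<and> basis B \<and> card B = n"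
proof -
  let ?U = "W \<union> set (unit_vecs n)"
  let ?P = "\<lambda>T. T \<subseteq> ?U \<and> lin_indpt T"
  have U: "?U \<subseteq> carrier_vec n" using W(1) unit_vecs_carrier by auto
  obtain B where B: "finite B" "maximal B ?P" "W \<subseteq> B"
    using maximal_exists_superset[of ?U ?P W] W by auto
  have BU: "B \<subseteq> ?U" and li: "lin_indpt B" using B(2) unfolding maximal_def by auto
  have Bc: "B \<subseteq> carrier_vec n" using BU U by auto
  have "set (unit_vecs n) \<subseteq> span B" using maximal_indpt_spans[OF U B(2)] by auto
  then have "span (set (unit_vecs n)) \<subseteq> span B"
    using span_is_subset[of "set (unit_vecs n)" "span B"] span_is_submodule[OF Bc] by auto
  then have "span B = carrier_vec n"
    using span_unit_vecs_is_carrier span_is_subset2[OF Bc] by auto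
  then have "basis B" unfolding basis_def using li Bc by auto
  moreover have "card B = n" using dim_basis[OF B(1) \<open>basis B\<close>] dim_is_n by simp
  ultimately show ?thesis using B by auto
qed

text \<open>Dual basis vectors: a member of an independent set can be detected by a linear form
  vanishing on all the other members.\<close>
lemma separating_vector:
  assumes W: "W \<subseteq> carrier_vec n" "finite W" "lin_indpt W" "w \<in> W"
  shows "\<exists>c \<in> carrier_vec n. c \<bullet> w \<noteq> 0 \<and> (\<forall>v\<in>W - {w}. c \<bullet> v = 0)"
proof -
  obtain B where B: "finite B" "W \<subseteq> B" "basis B" "card B = n"
    using indpt_extends_to_basis[OF W(1-3)] by auto
  have Bc: "B \<subseteq> carrier_vec n" and li: "lin_indpt B" using B(3) unfolding basis_def by auto
  obtain bs where bs: "set bs = B - {w}" "distinct bs"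
    using finite_distinct_list[of "B - {w}"] B(1) by auto
  let ?ws = "w # bs"
  have ws: "set ?ws = B" "distinct ?ws" using bs B(2) W(4) by auto
  have len: "length ?ws = n" using distinct_card[OF ws(2)] ws(1) B(4) by simp
  have wsc: "set ?ws \<subseteq> carrier_vec n" using ws Bc by auto
  let ?M = "mat_of_cols n ?ws"
  have M: "?M \<in> carrier_mat n n" using len by auto
  have cols: "cols ?M = ?ws" using cols_mat_of_cols[OF wsc] .
  have "rank ?M = n" using lin_indpt_full_rank[OF M] cols ws li by auto
  then have "det ?M\<^sup>T \<noteq> 0" using det_rank_iff[OF M] det_transpose[OF M] by auto
  then have "?M\<^sup>T \<in> Units (ring_mat TYPE('a) n undefined)"
    using det_non_zero_imp_unit[of "?M\<^sup>T" n] M by auto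
  then obtain P where P: "P \<in> carrier_mat n n" "?M\<^sup>T * P = 1\<^sub>m n"
    unfolding Units_def ring_mat_def by auto
  define c where "c = P *\<^sub>v unit_vec n 0"
  have c: "c \<in> carrier_vec n" unfolding c_def using P by auto
  have sol: "?M\<^sup>T *\<^sub>v c = unit_vec n 0"
    unfolding c_def using assoc_mult_mat_vec[of "?M\<^sup>T" n n P n "unit_vec n 0"] P M by auto
  have dual: "?ws ! j \<bullet> c = (if j = 0 then 1 else 0)" if j: "j < n" for j
  proof -
    have "?ws ! j = col ?M j" using j len cols cols_nth[of j ?M] M by (metis carrier_matD(2))
    also have "\<dots> = row ?M\<^sup>T j" using j M by auto
    finally have "?ws ! j \<bullet> c = (?M\<^sup>T *\<^sub>v c) $ j" using j M by auto
    then show ?thesis using sol j by auto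
  qed
  show ?thesis
  proof (intro bexI conjI ballI)
    show "c \<bullet> w \<noteq> 0" using dual[of 0] len comm_scalar_prod[OF c, of w] wsc by auto
    fix v assume "v \<in> W - {w}"
    then have "v \<in> set bs" using bs B(2) by auto
    then obtain j where "j < length bs" "bs ! j = v" by (auto simp: in_set_conv_nth)
    moreover have "v \<in> carrier_vec n" using \<open>v \<in> set bs\<close> wsc by auto
    ultimately show "c \<bullet> v = 0" using dual[of "Suc j"] len comm_scalar_prod[OF c, of v] by auto
  qed (rule c)
qed

lemma annihilator_span:
  assumes "U \<subseteq> carrier_vec n" "c \<in> carrier_vec n" "\<forall>u\<in>U. c \<bullet> u = 0" "w \<in> span U"
  shows "c \<bullet> w = 0"
proof -
  have "c \<in> orthogonal_complement U" using assms(2,3) unfolding orthogonal_complement_def by auto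
  then have "c \<in> orthogonal_complement (span U)" using in_orthogonal_complement_span[OF assms(1)] by auto
  then show ?thesis using assms(4) unfolding orthogonal_complement_def by auto
qed

lemma dim_span_eq_iff_annihilators:
  assumes S12: "S1 \<subseteq> S2" and S2: "S2 \<subseteq> carrier_vec n" "finite S2"
  shows "vectorspace.dim class_ring (span_vs S1) = vectorspace.dim class_ring (span_vs S2) \<longleftrightarrow>
    (\<forall>c\<in>carrier_vec n. (\<forall>w\<in>S1. c \<bullet> w = 0) \<longrightarrow> (\<forall>w\<in>S2. c \<bullet> w = 0))"
proof -
  have S1: "S1 \<subseteq> carrier_vec n" "finite S1" using S12 S2 finite_subset by auto
  have "lin_indpt {}"
    by (metis empty_subsetI fin_dim finite_basis_exists subset_li_is_li vec_vs vectorspace.basis_def)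
  then obtain U1 where U1: "finite U1" "maximal U1 (\<lambda>T. T \<subseteq> S1 \<and> lin_indpt T)"
    using maximal_exists_superset[of S1 "\<lambda>T. T \<subseteq> S1 \<and> lin_indpt T" "{}"] S1 by auto
  have U1S: "U1 \<subseteq> S1" "lin_indpt U1" using U1(2) unfolding maximal_def by auto
  have U1c: "U1 \<subseteq> carrier_vec n" using U1S S1 by auto
  obtain U2 where U2: "finite U2" "maximal U2 (\<lambda>T. T \<subseteq> S2 \<and> lin_indpt T)" "U1 \<subseteq> U2"
    using maximal_exists_superset[of S2 "\<lambda>T. T \<subseteq> S2 \<and> lin_indpt T" U1] S2 U1S S12 by auto
  have U2S: "U2 \<subseteq> S2" "lin_indpt U2" using U2(2) unfolding maximal_def by auto
  have dims: "vectorspace.dim class_ring (span_vs S1) = card U1"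
    "vectorspace.dim class_ring (span_vs S2) = card U2"
    using dim_span[OF S1 U1(2)] dim_span[OF S2 U2(2)] by auto
  have S1_ann: "\<forall>w\<in>S1. c \<bullet> w = 0" if "c \<in> carrier_vec n" "\<forall>u\<in>U1. c \<bullet> u = 0" for c
    using annihilator_span[OF U1c that] maximal_indpt_spans[OF S1(1) U1(2)] by auto
  show ?thesis
  proof
    assume "vectorspace.dim class_ring (span_vs S1) = vectorspace.dim class_ring (span_vs S2)"
    then have "U1 = U2" using dims card_subset_eq[OF U2(1) U2(3)] by simp
    then have "S2 \<subseteq> span U1" using maximal_indpt_spans[OF S2(1) U2(2)] by simp
    show "\<forall>c\<in>carrier_vec n. (\<forall>w\<in>S1. c \<bullet> w = 0) \<longrightarrow> (\<forall>w\<in>S2. c \<bullet> w = 0)"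
    proof (intro ballI impI)
      fix c w assume c: "c \<in> carrier_vec n" and "\<forall>w\<in>S1. c \<bullet> w = 0" and w: "w \<in> S2"
      then have "\<forall>u\<in>U1. c \<bullet> u = 0" using U1S by auto
      then show "c \<bullet> w = 0" using annihilator_span[OF U1c c] \<open>S2 \<subseteq> span U1\<close> w by auto
    qed
  next
    assume ann: "\<forall>c\<in>carrier_vec n. (\<forall>w\<in>S1. c \<bullet> w = 0) \<longrightarrow> (\<forall>w\<in>S2. c \<bullet> w = 0)"
    have "U2 \<subseteq> U1"
    proof
      fix w assume w: "w \<in> U2"
      show "w \<in> U1"
      proof (rule ccontr)
        assume "w \<notin> U1"
        obtain c where c: "c \<in> carrier_vec n" "c \<bullet> w \<noteq> 0" "\<forall>v\<in>U2 - {w}. c \<bullet> v = 0"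
          using separating_vector[of U2 w] U2S S2 U2(1) w by auto
        then have "\<forall>u\<in>U1. c \<bullet> u = 0" using U2(3) \<open>w \<notin> U1\<close> by auto
        then have "\<forall>w\<in>S1. c \<bullet> w = 0" using S1_ann c(1) by blast
        then have "c \<bullet> w = 0" using ann c(1) w U2S(1) by blast
        then show False using c(2) by simp
      qed
    qed
    then show "vectorspace.dim class_ring (span_vs S1) = vectorspace.dim class_ring (span_vs S2)"
      using dims U2(3) by auto
  qed
qed

lemma rank_eq_iff_annihilators:
  assumes "M1 \<in> carrier_mat n k1" "M2 \<in> carrier_mat n k2" "set (cols M1) \<subseteq> set (cols M2)"
  shows "rank M1 = rank M2 \<longleftrightarrow>
    (\<forall>c\<in>carrier_vec n. (\<forall>w\<in>set (cols M1). c \<bullet> w = 0) \<longrightarrow> (\<forall>w\<in>set (cols M2). c \<bullet> w = 0))"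
  unfolding rank_def
  by (rule dim_span_eq_iff_annihilators[OF assms(3)]) (use assms(2) cols_dim in blast)+

end

definition row_relations_extend :: "'a::field mat \<Rightarrow> nat \<Rightarrow> nat set \<Rightarrow> bool" where
  "row_relations_extend M n J \<longleftrightarrow>
     (\<forall>c. (\<forall>b\<in>J. (\<Sum>j\<in>J. c j * M $$ (j, b)) = 0) \<longrightarrow> (\<forall>b<n. (\<Sum>j\<in>J. c j * M $$ (j, b)) = 0))"

lemma pick_bij:
  assumes "finite J"
  shows "bij_betw (pick J) {..<card J} J"
proof (rule bij_betw_byWitness[where f' = "\<lambda>j. card {a\<in>J. a < j}"])
  show "\<forall>a\<in>{..<card J}. card {x\<in>J. x < pick J a} = a" using card_pick by auto
  show "\<forall>j\<in>J. pick J (card {a\<in>J. a < j}) = j" using pick_card_in_set by auto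
  show "pick J ` {..<card J} \<subseteq> J" using pick_in_set by auto
  have "card {a\<in>J. a < j} < card J" if "j \<in> J" for j
    using that assms by (intro psubset_card_mono) auto
  then show "(\<lambda>j. card {a\<in>J. a < j}) ` J \<subseteq> {..<card J}" by auto
qed

lemma pick_lessThan:
  assumes "b < n" shows "pick {..<n} b = b"
proof -
  have "{a \<in> {..<n}. a < b} = {..<b}" using assms by auto
  then show ?thesis using pick_card_in_set[of b "{..<n}"] assms by simp
qed

text \<open>Blocks of a square matrix \<open>M\<close> with row set \<open>J\<close>: the principal block
  \<open>M\<^sup>J\<^sub>J = submatrix M J J\<close> and the row block \<open>M\<^sup>J = submatrix M J {..<n}\<close>.\<close>
context
  fixes M :: "'a::field mat" and n :: nat and J :: "nat set"
  assumes M: "M \<in> carrier_mat n n" and J: "J \<subseteq> {..<n}"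
begin

lemma finite_J: "finite J" using J finite_subset by blast

lemma rows_J: "{i. i < n \<and> i \<in> J} = J" using J by auto

lemma submatrix_carrier: "submatrix M J K \<in> carrier_mat (card J) (card {b. b < n \<and> b \<in> K})"
  unfolding carrier_mat_def using dim_submatrix[of M J K] M rows_J by auto

lemma submatrix_entry:
  assumes "a < card J" "b < card {b. b < n \<and> b \<in> K}"
  shows "submatrix M J K $$ (a, b) = M $$ (pick J a, pick K b)"
  using submatrix_index[of a M J b K] assms M rows_J by auto

lemma col_row_block:
  assumes b: "b < n"
  shows "col (submatrix M J {..<n}) b = vec (card J) (\<lambda>a. M $$ (pick J a, b))"
proof (rule eq_vecI)
  have dims: "submatrix M J {..<n} \<in> carrier_mat (card J) n" using submatrix_carrier[of "{..<n}"] by simp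
  then show "dim_vec (col (submatrix M J {..<n}) b) = dim_vec (vec (card J) (\<lambda>a. M $$ (pick J a, b)))"
    by auto
  fix a assume "a < dim_vec (vec (card J) (\<lambda>a. M $$ (pick J a, b)))"
  then have a: "a < card J" by simp
  then show "col (submatrix M J {..<n}) b $ a = vec (card J) (\<lambda>a. M $$ (pick J a, b)) $ a"
    using dims b submatrix_entry[of a b "{..<n}"] pick_lessThan[OF b] by auto
qed

lemma cols_row_block: "set (cols (submatrix M J {..<n})) = (\<lambda>b. col (submatrix M J {..<n}) b) ` {..<n}"
  using submatrix_carrier[of "{..<n}"] unfolding cols_def by (auto simp: atLeast0LessThan)

lemma cols_principal_block:
  "set (cols (submatrix M J J)) = (\<lambda>b. col (submatrix M J {..<n}) b) ` J"
proof -
  have dims: "submatrix M J J \<in> carrier_mat (card J) (card J)" using submatrix_carrier[of J] rows_J by simp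
  have col: "col (submatrix M J J) a = col (submatrix M J {..<n}) (pick J a)" if a: "a < card J" for a
  proof (rule eq_vecI)
    have "pick J a \<in> J" using pick_in_set a by auto
    then have "col (submatrix M J {..<n}) (pick J a) = vec (card J) (\<lambda>i. M $$ (pick J i, pick J a))"
      using col_row_block J by auto
    then show "dim_vec (col (submatrix M J J) a) = dim_vec (col (submatrix M J {..<n}) (pick J a))"
      "\<And>i. i < dim_vec (col (submatrix M J {..<n}) (pick J a)) \<Longrightarrow>
         col (submatrix M J J) a $ i = col (submatrix M J {..<n}) (pick J a) $ i"
      using dims a submatrix_entry[of _ a J] rows_J by auto
  qed
  have "set (cols (submatrix M J J)) = (\<lambda>a. col (submatrix M J J) a) ` {..<card J}"
    using dims unfolding cols_def by (auto simp: atLeast0LessThan)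
  also have "\<dots> = (\<lambda>b. col (submatrix M J {..<n}) b) ` (pick J ` {..<card J})"
    using col by (auto simp: image_image)
  also have "pick J ` {..<card J} = J" using bij_betw_imp_surj_on[OF pick_bij[OF finite_J]] .
  finally show ?thesis .
qed

lemma scalar_col_row_block:
  assumes c: "c \<in> carrier_vec (card J)" and b: "b < n"
  shows "c \<bullet> col (submatrix M J {..<n}) b = (\<Sum>j\<in>J. c $ card {a\<in>J. a < j} * M $$ (j, b))"
proof -
  have "c \<bullet> col (submatrix M J {..<n}) b = (\<Sum>a<card J. c $ a * M $$ (pick J a, b))"
    unfolding col_row_block[OF b] scalar_prod_def using c by (simp add: lessThan_atLeast0)
  also have "\<dots> = (\<Sum>a<card J. c $ card {x\<in>J. x < pick J a} * M $$ (pick J a, b))"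
    by (rule sum.cong) (auto simp: card_pick)
  also have "\<dots> = (\<Sum>j\<in>J. c $ card {a\<in>J. a < j} * M $$ (j, b))"
    by (rule sum.reindex_bij_betw[OF pick_bij[OF finite_J]])
  finally show ?thesis .
qed

lemma vec_of_fun_on_J:
  assumes "j \<in> J"
  shows "vec (card J) (\<lambda>a. f (pick J a)) $ card {x\<in>J. x < j} = f j"
proof -
  have "card {x\<in>J. x < j} < card J" using assms finite_J by (intro psubset_card_mono) auto
  then show ?thesis using pick_card_in_set[OF assms] by simp
qed

lemma rank_blocks_eq_iff_row_relations_extend:
  "vec_space.rank (card J) (submatrix M J J) = vec_space.rank (card J) (submatrix M J {..<n})
   \<longleftrightarrow> row_relations_extend M n J"
proof -
  let ?col = "\<lambda>b. col (submatrix M J {..<n}) b"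
  let ?rel = "\<lambda>f b. \<Sum>j\<in>J. f j * M $$ (j, b)"
  let ?coords = "\<lambda>c j. c $ card {a\<in>J. a < j}"
  have carriers: "submatrix M J J \<in> carrier_mat (card J) (card J)"
    "submatrix M J {..<n} \<in> carrier_mat (card J) n"
    using submatrix_carrier[of J] submatrix_carrier[of "{..<n}"] rows_J by auto
  have sub: "set (cols (submatrix M J J)) \<subseteq> set (cols (submatrix M J {..<n}))"
    unfolding cols_principal_block cols_row_block using J by auto
  have "vec_space.rank (card J) (submatrix M J J) = vec_space.rank (card J) (submatrix M J {..<n})
    \<longleftrightarrow> (\<forall>c\<in>carrier_vec (card J). (\<forall>b\<in>J. c \<bullet> ?col b = 0) \<longrightarrow> (\<forall>b<n. c \<bullet> ?col b = 0))"
    using vec_space.rank_eq_iff_annihilators[OF carriers sub]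
    unfolding cols_principal_block cols_row_block by auto
  also have "\<dots> \<longleftrightarrow> (\<forall>c\<in>carrier_vec (card J).
      (\<forall>b\<in>J. ?rel (?coords c) b = 0) \<longrightarrow> (\<forall>b<n. ?rel (?coords c) b = 0))"
  proof (rule ball_cong[OF refl])
    fix c :: "'a vec" assume c: "c \<in> carrier_vec (card J)"
    have "\<forall>b<n. c \<bullet> ?col b = ?rel (?coords c) b" using scalar_col_row_block[OF c] by auto
    moreover have "\<forall>b\<in>J. c \<bullet> ?col b = ?rel (?coords c) b" using calculation J by auto
    ultimately show "((\<forall>b\<in>J. c \<bullet> ?col b = 0) \<longrightarrow> (\<forall>b<n. c \<bullet> ?col b = 0)) \<longleftrightarrow>
      ((\<forall>b\<in>J. ?rel (?coords c) b = 0) \<longrightarrow> (\<forall>b<n. ?rel (?coords c) b = 0))" by simp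
  qed
  also have "\<dots> \<longleftrightarrow> row_relations_extend M n J"
  proof
    assume vecs: "\<forall>c\<in>carrier_vec (card J).
      (\<forall>b\<in>J. ?rel (?coords c) b = 0) \<longrightarrow> (\<forall>b<n. ?rel (?coords c) b = 0)"
    show "row_relations_extend M n J" unfolding row_relations_extend_def
    proof (rule allI, rule impI)
      fix f :: "nat \<Rightarrow> 'a" assume f: "\<forall>b\<in>J. ?rel f b = 0"
      define c where "c = vec (card J) (\<lambda>a. f (pick J a))"
      have c: "c \<in> carrier_vec (card J)" unfolding c_def by simp
      have coords: "?rel (?coords c) b = ?rel f b" for b
        unfolding c_def by (rule sum.cong) (simp_all add: vec_of_fun_on_J)
      show "\<forall>b<n. ?rel f b = 0" using vecs[rule_format, OF c] f by (simp add: coords)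
    qed
  qed (auto simp: row_relations_extend_def)
  finally show ?thesis .
qed

end

definition flip_coords :: "nat \<Rightarrow> (nat \<Rightarrow> bit) \<Rightarrow> (nat \<Rightarrow> real) \<Rightarrow> (nat \<Rightarrow> real)" where
  "flip_coords n v x = (\<lambda>k. if k \<in> {1..n} \<and> v k = 1 then - x k else x k)"

text \<open>Row \<open>r\<close> (1-based) of \<open>\<tilde>A = A + I\<close>: the set of coordinates reversed by \<open>\<tau>\<^sub>\<plusminus>r\<close>.\<close>
definition tilde_row :: "bit mat \<Rightarrow> nat \<Rightarrow> nat \<Rightarrow> bit" where
  "tilde_row A r = (\<lambda>k. if k = r then 1 else ent A r k)"

definition row_sum :: "bit mat \<Rightarrow> nat list \<Rightarrow> nat \<Rightarrow> bit" where
  "row_sum A ds k = (\<Sum>d\<leftarrow>ds. tilde_row A d k)"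

definition face :: "nat \<Rightarrow> nat set \<Rightarrow> (nat \<Rightarrow> real) \<Rightarrow> (nat \<Rightarrow> real) set" where
  "face n D s = {x \<in> cube n. \<forall>i\<in>D. x i = s i / 4}"

definition sign_pattern :: "nat set \<Rightarrow> (nat \<Rightarrow> real) \<Rightarrow> bool" where
  "sign_pattern D s \<longleftrightarrow> (\<forall>i\<in>D. s i = 1 \<or> s i = -1)"

definition flip_signs :: "(nat \<Rightarrow> bit) \<Rightarrow> (nat \<Rightarrow> real) \<Rightarrow> nat \<Rightarrow> real" where
  "flip_signs v s = (\<lambda>i. if v i = 1 then - s i else s i)"

definition flip_idx :: "(nat \<Rightarrow> bit) \<Rightarrow> int \<Rightarrow> int" where
  "flip_idx v i = (if v (nat \<bar>i\<bar>) = 1 then - i else i)"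

definition face_point :: "nat \<Rightarrow> nat set \<Rightarrow> (nat \<Rightarrow> real) \<Rightarrow> real \<Rightarrow> nat \<Rightarrow> real" where
  "face_point n D s t = (\<lambda>i. if i \<in> D then s i / 4 else if i \<in> {1..n} then t else 0)"

lemma facet_idx_range: "facet_idx n j \<Longrightarrow> nat \<bar>j\<bar> \<in> {1..n}"
  unfolding facet_idx_def by auto

lemma sgn_real_cases: "(j::int) \<noteq> 0 \<Longrightarrow> (of_int (sgn j) :: real) = 1 \<or> of_int (sgn j) = -1"
  by (cases "j > 0") auto

lemma int_eq_by_abs_sgn:
  "(i::int) \<noteq> 0 \<Longrightarrow> k \<noteq> 0 \<Longrightarrow> nat \<bar>i\<bar> = nat \<bar>k\<bar> \<Longrightarrow> (of_int (sgn i) :: real) = of_int (sgn k) \<Longrightarrow> i = k"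
  by (cases "i > 0"; cases "k > 0") auto

lemma tau_eq_flip: "facet_idx n j \<Longrightarrow> tau n A j = flip_coords n (tilde_row A (nat \<bar>j\<bar>))"
  using facet_idx_range[of n j] unfolding tau_def flip_coords_def tilde_row_def by (auto simp: fun_eq_iff)

lemma flip_coords_compose:
  "flip_coords n v (flip_coords n w x) = flip_coords n (\<lambda>k. w k + v k) x"
  unfolding flip_coords_def fun_eq_iff by (auto split: bit.splits)

lemma row_sum_Cons: "row_sum A (d # ds) = (\<lambda>k. tilde_row A d k + row_sum A ds k)"
  unfolding row_sum_def by (simp add: fun_eq_iff del: add_bit_eq_xor)

lemma comp_tau_eq_flip:
  "\<forall>k\<in>set ks. facet_idx n k \<Longrightarrow> comp_tau n A ks = flip_coords n (row_sum A (map (\<lambda>k. nat \<bar>k\<bar>) ks))"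
proof (induction ks)
  case Nil
  show ?case by (simp add: fun_eq_iff flip_coords_def row_sum_def)
next
  case (Cons k ks)
  then show ?case
    by (simp add: fun_eq_iff tau_eq_flip flip_coords_compose row_sum_Cons del: add_bit_eq_xor)
qed

lemma flip_coords_cong: "\<forall>i\<in>{1..n}. v i = w i \<Longrightarrow> flip_coords n v = flip_coords n w"
  unfolding flip_coords_def by (auto simp: fun_eq_iff)

lemma flip_coords_cube: "x \<in> cube n \<Longrightarrow> flip_coords n v x \<in> cube n"
  unfolding cube_def flip_coords_def by auto

lemma flip_coords_involutive: "flip_coords n v (flip_coords n v x) = x"
  unfolding flip_coords_def by auto

lemma face_point_in_face:
  assumes "D \<subseteq> {1..n}" "sign_pattern D s" "\<bar>t\<bar> \<le> 1/4"
  shows "face_point n D s t \<in> face n D s"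
  using assms unfolding face_point_def face_def cube_def sign_pattern_def by (auto split: if_splits)

lemma face_sub_facet:
  assumes D: "D \<subseteq> {1..n}" "sign_pattern D s" and k: "facet_idx n k"
  shows "face n D s \<subseteq> facet n k \<longleftrightarrow> nat \<bar>k\<bar> \<in> D \<and> s (nat \<bar>k\<bar>) = of_int (sgn k)"
proof
  assume "face n D s \<subseteq> facet n k"
  then have "face_point n D s 0 \<in> facet n k" using face_point_in_face[OF D, of 0] by auto
  then have pt: "face_point n D s 0 (nat \<bar>k\<bar>) = of_int (sgn k) / 4" unfolding facet_def by auto
  moreover have "sgn k \<noteq> 0" using k unfolding facet_idx_def by (simp add: sgn_eq_0_iff)
  ultimately have "nat \<bar>k\<bar> \<in> D" using facet_idx_range[OF k] unfolding face_point_def by (auto split: if_splits)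
  then show "nat \<bar>k\<bar> \<in> D \<and> s (nat \<bar>k\<bar>) = of_int (sgn k)" using pt unfolding face_point_def by auto
next
  assume "nat \<bar>k\<bar> \<in> D \<and> s (nat \<bar>k\<bar>) = of_int (sgn k)"
  then show "face n D s \<subseteq> facet n k" unfolding face_def facet_def by auto
qed

lemma face_signs_unique:
  assumes "D \<subseteq> {1..n}" "sign_pattern D s" and "face n D s = face n D s'"
  shows "\<forall>i\<in>D. s i = s' i"
proof
  fix i assume "i \<in> D"
  have "face_point n D s 0 \<in> face n D s'" using face_point_in_face[OF assms(1,2), of 0] assms(3) by auto
  then show "s i = s' i" using \<open>i \<in> D\<close> unfolding face_def face_point_def by auto
qed

lemma face_cong: "\<forall>i\<in>D. s i = s' i \<Longrightarrow> face n D s = face n D s'"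
  unfolding face_def by auto

lemma sign_pattern_flip: "sign_pattern D s \<Longrightarrow> sign_pattern D (flip_signs v s)"
  unfolding sign_pattern_def flip_signs_def by auto

lemma flip_face:
  assumes "D \<subseteq> {1..n}"
  shows "flip_coords n v ` face n D s = face n D (flip_signs v s)"
proof
  show "flip_coords n v ` face n D s \<subseteq> face n D (flip_signs v s)"
    using assms flip_coords_cube unfolding face_def flip_signs_def by (auto simp: flip_coords_def)
  show "face n D (flip_signs v s) \<subseteq> flip_coords n v ` face n D s"
  proof
    fix y assume y: "y \<in> face n D (flip_signs v s)"
    have "flip_coords n v y \<in> face n D s"
      using y assms flip_coords_cube[of y n v] unfolding face_def flip_signs_def by (auto simp: flip_coords_def)
    then show "y \<in> flip_coords n v ` face n D s" using flip_coords_involutive[of n v y] by (metis image_eqI)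
  qed
qed

text \<open>A reflection fixing a face pointwise is the identity: faces contain points with
  all coordinates nonzero.\<close>
lemma flip_fixing_face_trivial:
  assumes D: "D \<subseteq> {1..n}" "sign_pattern D s" and fixed: "\<forall>x\<in>face n D s. flip_coords n v x = x"
  shows "\<forall>i\<in>{1..n}. v i = 0"
proof
  fix i assume i: "i \<in> {1..n}"
  let ?x = "face_point n D s (1/4)"
  have "?x i \<noteq> 0" using i D(2) unfolding face_point_def sign_pattern_def by auto
  moreover have "flip_coords n v ?x i = ?x i" using fixed face_point_in_face[OF D, of "1/4"] by auto
  ultimately show "v i = 0" using i unfolding flip_coords_def by (cases "v i") auto
qed

lemma tau_image_face:
  assumes "D \<subseteq> {1..n}" "facet_idx n k"
  shows "tau n A k ` face n D s = face n D (flip_signs (tilde_row A (nat \<bar>k\<bar>)) s)"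
  using tau_eq_flip[OF assms(2)] flip_face[OF assms(1)] by simp

lemma valid_comp_indices:
  assumes "D \<subseteq> {1..n}" "sign_pattern D s" "valid_comp n A ks (face n D s)"
  shows "\<forall>k\<in>set ks. facet_idx n k \<and> nat \<bar>k\<bar> \<in> D"
  using assms(2,3)
proof (induction ks arbitrary: s)
  case Nil then show ?case by simp
next
  case (Cons k ks)
  have k: "facet_idx n k" "face n D s \<subseteq> facet n k"
    and rest: "valid_comp n A ks (face n D (flip_signs (tilde_row A (nat \<bar>k\<bar>)) s))"
    using Cons.prems tau_image_face[OF assms(1)] by auto
  have "nat \<bar>k\<bar> \<in> D" using face_sub_facet[OF assms(1) Cons.prems(1) k(1)] k(2) by auto
  then show ?case using Cons.IH[OF sign_pattern_flip[OF Cons.prems(1)] rest] k(1) by auto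
qed

lemma valid_comp_exists:
  assumes "D \<subseteq> {1..n}" "sign_pattern D s" "set ds \<subseteq> D"
  shows "\<exists>ks. valid_comp n A ks (face n D s) \<and> map (\<lambda>k. nat \<bar>k\<bar>) ks = ds"
  using assms(2,3)
proof (induction ds arbitrary: s)
  case Nil
  show ?case by (rule exI[of _ "[]"]) simp
next
  case (Cons d ds)
  define k where "k = (if s d = 1 then int d else - int d)"
  have d: "d \<in> D" "d \<in> {1..n}" using Cons.prems assms(1) by auto
  have kd: "nat \<bar>k\<bar> = d" unfolding k_def by auto
  have k: "facet_idx n k" using d kd unfolding facet_idx_def k_def by auto
  have "s d = of_int (sgn k)" using Cons.prems(1) d unfolding sign_pattern_def k_def by auto
  then have "face n D s \<subseteq> facet n k" using face_sub_facet[OF assms(1) Cons.prems(1) k] kd d by auto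
  moreover obtain ks where "valid_comp n A ks (face n D (flip_signs (tilde_row A d) s))" "map (\<lambda>k. nat \<bar>k\<bar>) ks = ds"
    using Cons.IH[OF sign_pattern_flip[OF Cons.prems(1)]] Cons.prems(2) by auto
  ultimately show ?case
    using k kd tau_image_face[OF assms(1) k] by (intro exI[of _ "k # ks"]) auto
qed

lemma sign_pattern_sgn:
  assumes "\<forall>i\<in>D. \<exists>j::int. j \<noteq> 0 \<and> s i = of_int (sgn j)"
  shows "sign_pattern D s"
  unfolding sign_pattern_def
proof
  fix i assume "i \<in> D"
  then obtain j :: int where "j \<noteq> 0" "s i = of_int (sgn j)" using assms by blast
  then show "s i = 1 \<or> s i = -1" using sgn_real_cases[of j] by simp
qed

lemma facet_as_face: "facet n j = face n {nat \<bar>j\<bar>} (\<lambda>_. of_int (sgn j))"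
  unfolding facet_def face_def by auto

lemma facet_inter_as_face:
  assumes "nat \<bar>i\<bar> \<noteq> nat \<bar>k\<bar>"
  shows "facet n i \<inter> facet n k = face n {nat \<bar>i\<bar>, nat \<bar>k\<bar>}
     (\<lambda>m. if m = nat \<bar>i\<bar> then of_int (sgn i) else of_int (sgn k))"
  using assms unfolding facet_def face_def by auto

lemma facet_inj:
  assumes i: "facet_idx n i" and k: "facet_idx n k" and eq: "facet n i = facet n k"
  shows "i = k"
proof -
  have "face n {nat \<bar>i\<bar>} (\<lambda>_. of_int (sgn i)) \<subseteq> facet n k" using eq facet_as_face[of n i] by simp
  moreover have "sign_pattern {nat \<bar>i\<bar>} (\<lambda>_. of_int (sgn i))"
    using i unfolding facet_idx_def by (auto intro: sign_pattern_sgn)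
  ultimately have "nat \<bar>k\<bar> = nat \<bar>i\<bar> \<and> (of_int (sgn i) :: real) = of_int (sgn k)"
    using face_sub_facet[OF _ _ k] facet_idx_range[OF i] by auto
  then show ?thesis using int_eq_by_abs_sgn i k unfolding facet_idx_def by metis
qed

text \<open>A codimension-two face \<open>F(h) \<inter> F(m)\<close> lies in a unique facet other than \<open>F(m)\<close>:
  this is what makes \<open>\<Psi>\<close> well defined.\<close>
lemma facet_pair_unique:
  assumes g: "facet_idx n g" and h: "facet_idx n h" and m: "facet_idx n m"
    and hm: "nat \<bar>h\<bar> \<noteq> nat \<bar>m\<bar>" and eq: "facet n g \<inter> facet n m = facet n h \<inter> facet n m"
  shows "g = h"
proof -
  let ?D = "{nat \<bar>h\<bar>, nat \<bar>m\<bar>}"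
  let ?\<sigma> = "\<lambda>i. if i = nat \<bar>h\<bar> then of_int (sgn h) else (of_int (sgn m) :: real)"
  have D: "?D \<subseteq> {1..n}" using facet_idx_range[OF h] facet_idx_range[OF m] by auto
  have \<sigma>: "sign_pattern ?D ?\<sigma>" using h m unfolding facet_idx_def by (intro sign_pattern_sgn) auto
  have "face n ?D ?\<sigma> \<subseteq> facet n g" using eq facet_inter_as_face[OF hm] by auto
  then have g_in: "nat \<bar>g\<bar> \<in> ?D" and g_sgn: "?\<sigma> (nat \<bar>g\<bar>) = of_int (sgn g)"
    using face_sub_facet[OF D \<sigma> g] by auto
  have nz: "g \<noteq> 0" "h \<noteq> 0" "m \<noteq> 0" using g h m unfolding facet_idx_def by auto
  show ?thesis
  proof (cases "nat \<bar>g\<bar> = nat \<bar>h\<bar>")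
    case True
    then show ?thesis using g_sgn int_eq_by_abs_sgn[OF nz(1,2)] by auto
  next
    case False
    then have "g = m" using g_in g_sgn int_eq_by_abs_sgn[OF nz(1,3)] by auto
    then have "face n {nat \<bar>m\<bar>} (\<lambda>_. of_int (sgn m)) \<subseteq> facet n h"
      using eq facet_as_face[of n m] by auto
    moreover have "sign_pattern {nat \<bar>m\<bar>} (\<lambda>_. of_int (sgn m))"
      using nz(3) by (auto intro: sign_pattern_sgn)
    ultimately show ?thesis using face_sub_facet[OF _ _ h] facet_idx_range[OF m] hm by auto
  qed
qed

lemma Psi_facet:
  assumes i: "facet_idx n i" and k: "facet_idx n k" and ik: "i \<noteq> -k"
  shows "Psi n A k (facet n i) = facet n (flip_idx (tilde_row A (nat \<bar>k\<bar>)) i)"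
proof (cases "i = k")
  case True
  then show ?thesis unfolding Psi_def flip_idx_def tilde_row_def by simp
next
  case False
  let ?r = "tilde_row A (nat \<bar>k\<bar>)"
  let ?i' = "flip_idx ?r i"
  have ne: "nat \<bar>i\<bar> \<noteq> nat \<bar>k\<bar>" using False ik by auto
  have i': "facet_idx n ?i'" "nat \<bar>?i'\<bar> = nat \<bar>i\<bar>"
    using i unfolding facet_idx_def flip_idx_def by auto
  have nk: "facet_idx n (-k)" "nat \<bar>?i'\<bar> \<noteq> nat \<bar>-k\<bar>" using k ne i'(2) unfolding facet_idx_def by auto
  let ?D = "{nat \<bar>i\<bar>, nat \<bar>k\<bar>}"
  have D: "?D \<subseteq> {1..n}" using facet_idx_range[OF i] facet_idx_range[OF k] by auto
  have image: "tau n A k ` (facet n i \<inter> facet n k) = facet n ?i' \<inter> facet n (-k)"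
  proof -
    have "tau n A k ` (facet n i \<inter> facet n k) = face n ?D
        (flip_signs ?r (\<lambda>m. if m = nat \<bar>i\<bar> then of_int (sgn i) else of_int (sgn k)))"
      using facet_inter_as_face[OF ne] tau_image_face[OF D k] by simp
    also have "\<dots> = face n ?D (\<lambda>m. if m = nat \<bar>i\<bar> then of_int (sgn ?i') else of_int (sgn (-k)))"
      by (rule face_cong) (use ne in \<open>auto simp: flip_signs_def flip_idx_def tilde_row_def sgn_minus\<close>)
    also have "\<dots> = facet n ?i' \<inter> facet n (-k)"
      using facet_inter_as_face[of ?i' "-k" n] nk(2) i'(2) by simp
    finally show ?thesis .
  qed
  have "(THE G. G \<in> facets n \<and> G \<inter> facet n (-k) = tau n A k ` (facet n i \<inter> facet n k)) = facet n ?i'"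
  proof (rule the_equality)
    show "facet n ?i' \<in> facets n \<and> facet n ?i' \<inter> facet n (-k) = tau n A k ` (facet n i \<inter> facet n k)"
      using i'(1) image unfolding facets_def by auto
  next
    fix G assume G: "G \<in> facets n \<and> G \<inter> facet n (-k) = tau n A k ` (facet n i \<inter> facet n k)"
    then obtain g where g: "facet_idx n g" "G = facet n g" unfolding facets_def by auto
    then have "g = ?i'" using facet_pair_unique[OF g(1) i'(1) nk] G image by auto
    then show "G = facet n ?i'" using g by simp
  qed
  moreover have "facet n i \<noteq> facet n k" using facet_inj[OF i k] False by auto
  ultimately show ?thesis unfolding Psi_def by simp
qed

lemma flip_idx_compose: "flip_idx v (flip_idx w i) = flip_idx (\<lambda>m. w m + v m) i"
  unfolding flip_idx_def by (cases "v (nat \<bar>i\<bar>)"; cases "w (nat \<bar>i\<bar>)") auto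

lemma comp_Psi_eq:
  assumes "D \<subseteq> {1..n}" "sign_pattern D s" "valid_comp n A ks (face n D s)"
    "facet_idx n i" "nat \<bar>i\<bar> \<in> D" "s (nat \<bar>i\<bar>) = of_int (sgn i)"
  shows "comp_Psi n A ks (facet n i) = facet n (flip_idx (row_sum A (map (\<lambda>k. nat \<bar>k\<bar>) ks)) i)"
  using assms(2-6)
proof (induction ks arbitrary: s i)
  case Nil
  then show ?case by (simp add: flip_idx_def row_sum_def)
next
  case (Cons k ks)
  let ?r = "tilde_row A (nat \<bar>k\<bar>)"
  have k: "facet_idx n k" "face n D s \<subseteq> facet n k"
    and rest: "valid_comp n A ks (face n D (flip_signs ?r s))"
    using Cons.prems tau_image_face[OF assms(1)] by auto
  have sk: "s (nat \<bar>k\<bar>) = of_int (sgn k)" using face_sub_facet[OF assms(1) Cons.prems(1) k(1)] k(2) by auto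
  have "i \<noteq> -k"
  proof
    assume "i = -k"
    then show False using sk Cons.prems(5) k(1) unfolding facet_idx_def by (cases "k > 0") auto
  qed
  then have "comp_Psi n A (k # ks) (facet n i) = comp_Psi n A ks (facet n (flip_idx ?r i))"
    using Psi_facet[OF Cons.prems(3) k(1)] by simp
  also have "\<dots> = facet n (flip_idx (row_sum A (map (\<lambda>k. nat \<bar>k\<bar>) ks)) (flip_idx ?r i))"
    using Cons.prems(3-5)
    by (intro Cons.IH[OF sign_pattern_flip[OF Cons.prems(1)] rest])
      (auto simp: facet_idx_def flip_idx_def flip_signs_def sgn_minus)
  also have "\<dots> = facet n (flip_idx (row_sum A (map (\<lambda>k. nat \<bar>k\<bar>) (k # ks))) i)"
    by (simp only: flip_idx_compose list.map row_sum_Cons)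
  finally show ?case .
qed

definition row_sums_faithful :: "nat \<Rightarrow> bit mat \<Rightarrow> nat set \<Rightarrow> bool" where
  "row_sums_faithful n A D \<longleftrightarrow> (\<forall>ds. set ds \<subseteq> D \<longrightarrow>
     (\<forall>i\<in>D. row_sum A ds i = 0) \<longrightarrow> (\<forall>i\<in>{1..n}. row_sum A ds i = 0))"

lemma bit_add_eq_0_iff: "(x::bit) + y = 0 \<longleftrightarrow> x = y"
  by (cases x; cases y) auto

lemma row_sum_append: "row_sum A (ds @ es) = (\<lambda>k. row_sum A ds k + row_sum A es k)"
  unfolding row_sum_def by (simp add: fun_eq_iff del: add_bit_eq_xor)

lemma proper_face_iff:
  "proper_face n f \<longleftrightarrow> (\<exists>D s. D \<subseteq> {1..n} \<and> D \<noteq> {} \<and> sign_pattern D s \<and> f = face n D s)"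
  unfolding proper_face_def face_def sign_pattern_def by blast

lemma valid_comps_same_image:
  assumes D: "D \<subseteq> {1..n}" and s: "sign_pattern D s"
    and valid: "valid_comp n A ks (face n D s)" "valid_comp n A ks' (face n D s)"
    and image: "comp_tau n A ks ` face n D s = comp_tau n A ks' ` face n D s"
  shows "\<forall>i\<in>D. row_sum A (map (\<lambda>k. nat \<bar>k\<bar>) ks) i = row_sum A (map (\<lambda>k. nat \<bar>k\<bar>) ks') i"
proof -
  let ?v = "row_sum A (map (\<lambda>k. nat \<bar>k\<bar>) ks)" and ?v' = "row_sum A (map (\<lambda>k. nat \<bar>k\<bar>) ks')"
  have "comp_tau n A ks = flip_coords n ?v" "comp_tau n A ks' = flip_coords n ?v'"
    using comp_tau_eq_flip valid_comp_indices[OF D s valid(1)] valid_comp_indices[OF D s valid(2)] by auto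
  then have "face n D (flip_signs ?v s) = face n D (flip_signs ?v' s)"
    using image flip_face[OF D] by simp
  then have "\<forall>i\<in>D. flip_signs ?v s i = flip_signs ?v' s i"
    using face_signs_unique[OF D sign_pattern_flip[OF s]] by blast
  moreover have "\<forall>i\<in>D. s i \<noteq> 0" using s unfolding sign_pattern_def by auto
  ultimately show ?thesis unfolding flip_signs_def by (auto split: bit.splits if_splits)
qed

text \<open>Necessity: a row sum over \<open>D\<close> vanishing on \<open>D\<close> is realized by a valid composition
  mapping the face \<open>{x\<^sub>i = 1/4, i \<in> D}\<close> onto itself; strongness compares it with the empty
  composition, so the reflection is the identity and the row sum vanishes.\<close>
lemma strong_imp_row_sums_faithful:
  assumes strong: "strong n A" and D: "D \<subseteq> {1..n}" "D \<noteq> {}"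
  shows "row_sums_faithful n A D"
  unfolding row_sums_faithful_def
proof (intro allI impI)
  fix ds assume ds: "set ds \<subseteq> D" and zero: "\<forall>i\<in>D. row_sum A ds i = 0"
  let ?s = "\<lambda>_::nat. 1::real"
  let ?f = "face n D ?s"
  have s: "sign_pattern D ?s" unfolding sign_pattern_def by simp
  then have proper: "proper_face n ?f" using D unfolding proper_face_iff by blast
  obtain ks where ks: "valid_comp n A ks ?f" "map (\<lambda>k. nat \<bar>k\<bar>) ks = ds"
    using valid_comp_exists[OF D(1) s ds] by blast
  have ct: "comp_tau n A ks = flip_coords n (row_sum A ds)"
    using comp_tau_eq_flip valid_comp_indices[OF D(1) s ks(1)] ks(2) by auto
  have "comp_tau n A ks ` ?f = comp_tau n A [] ` ?f"
    unfolding ct flip_face[OF D(1)] using zero by (auto intro!: face_cong simp: flip_signs_def)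
  then have "\<forall>x\<in>?f. comp_tau n A ks x = comp_tau n A [] x"
    using strong[unfolded strong_def, rule_format, of ?f ks "[]"] proper ks(1) by simp
  then show "\<forall>i\<in>{1..n}. row_sum A ds i = 0" using flip_fixing_face_trivial[OF D(1) s] ct by simp
qed

text \<open>Under faithfulness, row sums over \<open>D\<close> agreeing on \<open>D\<close> agree everywhere
  (their \<open>\<int>\<^sub>2\<close>-sum is the row sum of the concatenated list).\<close>
lemma row_sums_faithful_agree:
  assumes faithful: "row_sums_faithful n A D" and "set ds \<subseteq> D" "set es \<subseteq> D"
    and on_D: "\<forall>i\<in>D. row_sum A ds i = row_sum A es i"
  shows "\<forall>i\<in>{1..n}. row_sum A ds i = row_sum A es i"
proof -
  have "set (ds @ es) \<subseteq> D" using assms(2,3) by auto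
  moreover have "\<forall>i\<in>D. row_sum A (ds @ es) i = 0"
    using on_D by (simp add: row_sum_append bit_add_eq_0_iff del: add_bit_eq_xor)
  ultimately have "\<forall>i\<in>{1..n}. row_sum A (ds @ es) i = 0"
    using faithful unfolding row_sums_faithful_def by blast
  then show ?thesis by (simp add: row_sum_append bit_add_eq_0_iff del: add_bit_eq_xor)
qed

lemma comp_Psi_agree:
  assumes D: "D \<subseteq> {1..n}" and s: "sign_pattern D s"
    and valid: "valid_comp n A ks (face n D s)" "valid_comp n A ks' (face n D s)"
    and on_D: "\<forall>i\<in>D. row_sum A (map (\<lambda>k. nat \<bar>k\<bar>) ks) i = row_sum A (map (\<lambda>k. nat \<bar>k\<bar>) ks') i"
    and F: "F \<in> Xi n (face n D s)"
  shows "comp_Psi n A ks F = comp_Psi n A ks' F"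
proof -
  obtain i where i: "facet_idx n i" "F = facet n i" "face n D s \<subseteq> facet n i"
    using F unfolding Xi_def facets_def by auto
  then have iD: "nat \<bar>i\<bar> \<in> D" "s (nat \<bar>i\<bar>) = of_int (sgn i)" using face_sub_facet[OF D s i(1)] by auto
  have "flip_idx (row_sum A (map (\<lambda>k. nat \<bar>k\<bar>) ks)) i = flip_idx (row_sum A (map (\<lambda>k. nat \<bar>k\<bar>) ks')) i"
    using on_D iD(1) unfolding flip_idx_def by simp
  then show ?thesis
    using comp_Psi_eq[OF D s valid(1) i(1) iD] comp_Psi_eq[OF D s valid(2) i(1) iD] i(2) by simp
qed

text \<open>Sufficiency: two valid compositions with the same image of a proper face have row sums
  agreeing on \<open>D\<close>, hence everywhere by faithfulness; so the \<open>\<tau>\<close>-composites coincide, and so do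
  the \<open>\<Psi>\<close>-composites.\<close>
lemma row_sums_faithful_imp_strong:
  assumes faithful: "\<forall>D. D \<subseteq> {1..n} \<and> D \<noteq> {} \<longrightarrow> row_sums_faithful n A D"
  shows "strong n A"
  unfolding strong_def
proof (intro allI impI)
  fix f ks ks'
  assume H: "proper_face n f \<and> valid_comp n A ks f \<and> valid_comp n A ks' f
    \<and> comp_tau n A ks ` f = comp_tau n A ks' ` f"
  then obtain D s where D: "D \<subseteq> {1..n}" "D \<noteq> {}" and s: "sign_pattern D s" and f: "f = face n D s"
    unfolding proper_face_iff by blast
  let ?ds = "map (\<lambda>k. nat \<bar>k\<bar>) ks" and ?es = "map (\<lambda>k. nat \<bar>k\<bar>) ks'"
  have valid: "valid_comp n A ks (face n D s)" "valid_comp n A ks' (face n D s)" using H f by auto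
  have idx: "\<forall>k\<in>set ks. facet_idx n k \<and> nat \<bar>k\<bar> \<in> D" "\<forall>k\<in>set ks'. facet_idx n k \<and> nat \<bar>k\<bar> \<in> D"
    using valid_comp_indices[OF D(1) s valid(1)] valid_comp_indices[OF D(1) s valid(2)] by auto
  have on_D: "\<forall>i\<in>D. row_sum A ?ds i = row_sum A ?es i"
    using valid_comps_same_image[OF D(1) s valid] H f by simp
  have "row_sums_faithful n A D" using faithful D by blast
  moreover have "set ?ds \<subseteq> D" "set ?es \<subseteq> D" using idx by auto
  ultimately have everywhere: "\<forall>i\<in>{1..n}. row_sum A ?ds i = row_sum A ?es i"
    using row_sums_faithful_agree on_D by blast
  have "comp_tau n A ks = flip_coords n (row_sum A ?ds)" using comp_tau_eq_flip idx(1) by auto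
  also have "\<dots> = flip_coords n (row_sum A ?es)" by (rule flip_coords_cong[OF everywhere])
  also have "\<dots> = comp_tau n A ks'" using comp_tau_eq_flip idx(2) by auto
  finally have taus: "comp_tau n A ks = comp_tau n A ks'" .
  show "(\<forall>x\<in>f. comp_tau n A ks x = comp_tau n A ks' x) \<and> (\<forall>F\<in>Xi n f. comp_Psi n A ks F = comp_Psi n A ks' F)"
    using taus comp_Psi_agree[OF D(1) s valid on_D] unfolding f by simp
qed

lemma strong_iff_row_sums_faithful:
  "strong n A \<longleftrightarrow> (\<forall>D. D \<subseteq> {1..n} \<and> D \<noteq> {} \<longrightarrow> row_sums_faithful n A D)"
proof
  assume "strong n A"
  then show "\<forall>D. D \<subseteq> {1..n} \<and> D \<noteq> {} \<longrightarrow> row_sums_faithful n A D"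
    using strong_imp_row_sums_faithful by blast
qed (rule row_sums_faithful_imp_strong)

lemma sum_list_map_count:
  fixes f :: "'a \<Rightarrow> 'b::semiring_1"
  assumes "finite X" "set xs \<subseteq> X"
  shows "(\<Sum>x\<leftarrow>xs. f x) = (\<Sum>x\<in>X. of_nat (count_list xs x) * f x)"
  using assms(2)
proof (induction xs)
  case Nil
  then show ?case by simp
next
  case (Cons a xs)
  have "(\<Sum>x\<in>X. of_nat (count_list (a # xs) x) * f x)
      = (\<Sum>x\<in>X. (if x = a then f x else 0) + of_nat (count_list xs x) * f x)"
    by (rule sum.cong) (auto simp: distrib_right)
  also have "\<dots> = (\<Sum>x\<in>X. (if x = a then f x else 0)) + (\<Sum>x\<in>X. of_nat (count_list xs x) * f x)"
    by (rule sum.distrib)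
  also have "(\<Sum>x\<in>X. (if x = a then f x else 0)) = f a" using Cons.prems assms(1) by (simp add: sum.delta')
  finally show ?case using Cons by simp
qed

lemma count_list_distinct: "distinct xs \<Longrightarrow> count_list xs x = (if x \<in> set xs then 1 else 0)"
  by (induction xs) auto

lemma coefficients_realized:
  fixes c :: "nat \<Rightarrow> bit"
  assumes "finite J"
  shows "\<exists>ds. set ds \<subseteq> Suc ` J \<and> (\<forall>j\<in>J. of_nat (count_list ds (Suc j)) = c j)"
proof -
  define ds where "ds = map Suc (sorted_list_of_set {j\<in>J. c j = 1})"
  have "distinct ds" "set ds = Suc ` {j\<in>J. c j = 1}" unfolding ds_def using assms by (simp_all add: distinct_map)
  then have "count_list ds (Suc j) = (if c j = 1 then 1 else 0)" if "j \<in> J" for j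
    using that by (auto simp: count_list_distinct)
  then show ?thesis using \<open>set ds = _\<close> by (intro exI[of _ ds]) (auto split: bit.splits)
qed

text \<open>Passing from 1-based coordinates to 0-based matrix indices: the rows of \<open>\<tilde>A\<close> are
  those of the matrix \<open>A + 1\<^sub>m n\<close>, and a row sum is the linear combination of these rows with the
  parities of the multiplicities as coefficients.\<close>
lemma tilde_row_entry:
  assumes "A \<in> carrier_mat n n" "\<forall>i<n. A $$ (i, i) = 0" "j < n" "b < n"
  shows "tilde_row A (Suc j) (Suc b) = (A + 1\<^sub>m n) $$ (j, b)"
  using assms unfolding tilde_row_def ent_def by auto

lemma row_sum_as_combination:
  assumes A: "A \<in> carrier_mat n n" "\<forall>i<n. A $$ (i, i) = 0" and J: "J \<subseteq> {..<n}"
    and ds: "set ds \<subseteq> Suc ` J" and b: "b < n"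
  shows "row_sum A ds (Suc b) = (\<Sum>j\<in>J. of_nat (count_list ds (Suc j)) * (A + 1\<^sub>m n) $$ (j, b))"
proof -
  have finJ: "finite J" using J finite_subset by blast
  have "row_sum A ds (Suc b) = (\<Sum>d\<in>Suc ` J. of_nat (count_list ds d) * tilde_row A d (Suc b))"
    unfolding row_sum_def by (rule sum_list_map_count[OF finite_imageI[OF finJ] ds])
  also have "\<dots> = (\<Sum>j\<in>J. of_nat (count_list ds (Suc j)) * tilde_row A (Suc j) (Suc b))"
    by (rule sum.reindex_cong[of Suc]) auto
  also have "\<dots> = (\<Sum>j\<in>J. of_nat (count_list ds (Suc j)) * (A + 1\<^sub>m n) $$ (j, b))"
    by (rule sum.cong[OF refl]) (use tilde_row_entry[OF A _ b] J in auto)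
  finally show ?thesis .
qed

lemma ball_atLeastAtMost_shift: "(\<forall>i\<in>{1..n}. P i) \<longleftrightarrow> (\<forall>b<n. P (Suc b))"
proof
  assume all_b: "\<forall>b<n. P (Suc b)"
  show "\<forall>i\<in>{1..n}. P i"
  proof
    fix i assume "i \<in> {1..n}"
    then obtain b where "i = Suc b" "b < n" by (cases i) auto
    then show "P i" using all_b by simp
  qed
qed auto

lemma row_sums_faithful_iff_row_relations_extend:
  assumes A: "A \<in> carrier_mat n n" "\<forall>i<n. A $$ (i, i) = 0" and J: "J \<subseteq> {..<n}"
  shows "row_sums_faithful n A (Suc ` J) \<longleftrightarrow> row_relations_extend (A + 1\<^sub>m n) n J"
proof
  let ?rel = "\<lambda>c b. \<Sum>j\<in>J. c j * (A + 1\<^sub>m n) $$ (j, b)"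
  note combination = row_sum_as_combination[OF A J]
  assume faithful: "row_sums_faithful n A (Suc ` J)"
  show "row_relations_extend (A + 1\<^sub>m n) n J" unfolding row_relations_extend_def
  proof (rule allI, rule impI)
    fix c :: "nat \<Rightarrow> bit" assume rel: "\<forall>b\<in>J. ?rel c b = 0"
    obtain ds where ds: "set ds \<subseteq> Suc ` J" "\<forall>j\<in>J. of_nat (count_list ds (Suc j)) = c j"
      using coefficients_realized[OF finite_subset[OF J finite_lessThan]] by blast
    have sums: "row_sum A ds (Suc b) = ?rel c b" if "b < n" for b
      unfolding combination[OF ds(1) that] using ds(2) by (intro sum.cong) auto
    have "\<forall>b\<in>J. row_sum A ds (Suc b) = 0" using sums rel J by auto
    then have "\<forall>i\<in>{1..n}. row_sum A ds i = 0" using faithful ds(1) unfolding row_sums_faithful_def by blast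
    then show "\<forall>b<n. ?rel c b = 0" unfolding ball_atLeastAtMost_shift using sums by simp
  qed
next
  let ?rel = "\<lambda>c b. \<Sum>j\<in>J. c j * (A + 1\<^sub>m n) $$ (j, b)"
  note combination = row_sum_as_combination[OF A J]
  assume rel: "row_relations_extend (A + 1\<^sub>m n) n J"
  show "row_sums_faithful n A (Suc ` J)" unfolding row_sums_faithful_def
  proof (intro allI impI)
    fix ds assume ds: "set ds \<subseteq> Suc ` J" and zero: "\<forall>i\<in>Suc ` J. row_sum A ds i = 0"
    let ?c = "\<lambda>j. of_nat (count_list ds (Suc j)) :: bit"
    have "?rel ?c b = 0" if "b \<in> J" for b
    proof -
      have "b < n" "row_sum A ds (Suc b) = 0" using that J zero by auto
      then show ?thesis using combination[OF ds] by metis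
    qed
    then have "\<forall>b<n. ?rel ?c b = 0" using rel[unfolded row_relations_extend_def, THEN spec[of _ ?c]] by blast
    then show "\<forall>i\<in>{1..n}. row_sum A ds i = 0" unfolding ball_atLeastAtMost_shift using combination[OF ds] by simp
  qed
qed

lemma all_nonempty_subsets_shift:
  "(\<forall>D. D \<subseteq> {1..n} \<and> D \<noteq> {} \<longrightarrow> P D) \<longleftrightarrow> (\<forall>J. J \<subseteq> {..<n} \<and> J \<noteq> {} \<longrightarrow> P (Suc ` J))"
proof
  assume "\<forall>J. J \<subseteq> {..<n} \<and> J \<noteq> {} \<longrightarrow> P (Suc ` J)"
  moreover have "D = Suc ` ((\<lambda>d. d - 1) ` D) \<and> (\<lambda>d. d - 1) ` D \<subseteq> {..<n}" if "D \<subseteq> {1..n}" for D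
    using that by (force simp: image_iff)
  ultimately show "\<forall>D. D \<subseteq> {1..n} \<and> D \<noteq> {} \<longrightarrow> P D" by (metis image_is_empty)
next
  assume all: "\<forall>D. D \<subseteq> {1..n} \<and> D \<noteq> {} \<longrightarrow> P D"
  show "\<forall>J. J \<subseteq> {..<n} \<and> J \<noteq> {} \<longrightarrow> P (Suc ` J)"
  proof (intro allI impI)
    fix J assume "J \<subseteq> {..<n} \<and> J \<noteq> {}"
    then have "Suc ` J \<subseteq> {1..n}" "Suc ` J \<noteq> {}" by (auto simp flip: image_Suc_lessThan)
    then show "P (Suc ` J)" using all by blast
  qed
qed

theorem mainTheorem13:
  fixes n :: nat and A :: "bit mat"
  assumes "A \<in> carrier_mat n n"
    and "\<forall>i<n. A $$ (i, i) = 0"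
  shows "strong n A \<longleftrightarrow>
    (\<forall>J. J \<subseteq> {..<n} \<and> J \<noteq> {} \<longrightarrow>
       vec_space.rank (card J) (submatrix (A + 1\<^sub>m n) J J)
       = vec_space.rank (card J) (submatrix (A + 1\<^sub>m n) J {..<n}))"
proof -
  have "strong n A \<longleftrightarrow> (\<forall>J. J \<subseteq> {..<n} \<and> J \<noteq> {} \<longrightarrow> row_sums_faithful n A (Suc ` J))"
    unfolding strong_iff_row_sums_faithful by (rule all_nonempty_subsets_shift)
  also have "\<dots> \<longleftrightarrow> (\<forall>J. J \<subseteq> {..<n} \<and> J \<noteq> {} \<longrightarrow> row_relations_extend (A + 1\<^sub>m n) n J)"
    using row_sums_faithful_iff_row_relations_extend[OF assms] by auto
  also have "\<dots> \<longleftrightarrow> (\<forall>J. J \<subseteq> {..<n} \<and> J \<noteq> {} \<longrightarrow>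
       vec_space.rank (card J) (submatrix (A + 1\<^sub>m n) J J)
       = vec_space.rank (card J) (submatrix (A + 1\<^sub>m n) J {..<n}))"
    using rank_blocks_eq_iff_row_relations_extend[of "A + 1\<^sub>m n" n] assms(1) by auto
  finally show ?thesis .
qed

end
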